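(* Let $F$ be a finite abelian group with cardinality $|F|\ge3$. Then $\lambda(F)\le\frac1{|F|}\log(|F|-1)$.
   Context: For a compact abelian group $G$ with normalized Haar measure $\mu$ (for finite $G$, the uniform probability measure) and (multiplicative) dual group of characters $\widehat{G}$, let $\mathbb{Z}[\widehat{G}]$ denote the ring of integral linear combinations of characters, regarded as functions on $G$. For $f\in\mathbb{Z}[\widehat{G}]$, the logarithmic Mahler measure over $G$ is $\mathsf{m}_G(f)=\int_G\log|f|\,d\mu$ (with $\log 0=-\infty$). The Lehmer constant of $G$ is $\lambda(G)=\inf\{\mathsf{m}_G(f): f\in\mathbb{Z}[\widehat{G}],\ \mathsf{m}_G(f)>0\}$. *)

theory Defs
  imports Complex_Main "HOL-Library.Extended_Real"
begin

text \<open>A finite abelian group is modelled as a finite type of class ab_group_add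
  (written additively). Characters are homomorphisms into the multiplicative
  group of nonzero complex numbers.\<close>

definition characters :: "('a::ab_group_add \<Rightarrow> complex) set" where
  "characters = {\<chi>. \<chi> 0 = 1 \<and> (\<forall>x y. \<chi> (x + y) = \<chi> x * \<chi> y)}"

text \<open>The ring Z[dual G]: integral linear combinations of characters, as functions on G.\<close>
definition int_char_comb :: "('a::ab_group_add \<Rightarrow> complex) set" where
  "int_char_comb = {f. \<exists>S c. finite S \<and> S \<subseteq> characters \<and>
      f = (\<lambda>x. \<Sum>\<chi>\<in>S. of_int (c \<chi>) * \<chi> x)}"

definition mahler_m :: "('a::{finite,ab_group_add} \<Rightarrow> complex) \<Rightarrow> ereal" where
  "mahler_m f = (if \<exists>x. f x = 0 then -\<infinity>
     else ereal ((\<Sum>x\<in>UNIV. ln (cmod (f x))) / real (card (UNIV :: 'a set))))"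

definition lehmer_const :: "'a::{finite,ab_group_add} itself \<Rightarrow> ereal" where
  "lehmer_const _ = Inf {mahler_m f | f :: 'a \<Rightarrow> complex. f \<in> int_char_comb \<and> mahler_m f > 0}"

end

theory Submission
  imports Defs "HOL-Library.FuncSet"
begin

text \<open>The sum \<open>f\<close> of all nontrivial characters is an integral combination of characters,
  and by the orthogonality relations it equals \<open>|F| - 1\<close> at \<open>0\<close> and \<open>-1\<close> everywhere else;
  so its Mahler measure is \<open>log (|F| - 1) / |F|\<close>, which is positive once \<open>|F| \<ge> 3\<close>.
  Orthogonality rests on the fact that characters separate the points of \<open>F\<close>. This is obtained
  by extending a character \<open>\<chi>\<close> from a subgroup \<open>H\<close> to \<open>H + \<langle>g\<rangle>\<close>, one element \<open>g\<close> at a time,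
  prescribing at \<open>g\<close> any \<open>m\<close>-th root of \<open>\<chi> (m g)\<close>, where \<open>m\<close> is the least positive
  multiplier with \<open>m g \<in> H\<close>.\<close>

primrec nmult :: "nat \<Rightarrow> 'a::ab_group_add \<Rightarrow> 'a" where
  "nmult 0 g = 0"
| "nmult (Suc k) g = g + nmult k g"

lemma nmult_add: "nmult (a + b) g = nmult a g + nmult b g"
  by (induction a) (auto simp: add.assoc)

lemma nmult_mult: "nmult (a * b) g = nmult a (nmult b g)"
  by (induction a) (auto simp: nmult_add)

lemma ex_nmult_eq_0:
  fixes g :: "'a::{finite,ab_group_add}"
  shows "\<exists>k>0. nmult k g = 0"
proof -
  have "\<not> inj (\<lambda>k. nmult k g)"
    using finite_imageD[of "\<lambda>k. nmult k g" UNIV] by auto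
  then obtain i j where "i < j" "nmult i g = nmult j g"
    unfolding inj_def by (metis linorder_neqE_nat)
  then have "nmult (j - i) g + nmult i g = 0 + nmult i g"
    by (metis nmult_add le_add_diff_inverse2 less_imp_le add_0)
  then show ?thesis
    using \<open>i < j\<close> by (intro exI[of _ "j - i"]) simp
qed

definition subgroup :: "'a::ab_group_add set \<Rightarrow> bool" where
  "subgroup H \<longleftrightarrow> 0 \<in> H \<and> (\<forall>x\<in>H. \<forall>y\<in>H. x + y \<in> H) \<and> (\<forall>x\<in>H. - x \<in> H)"

lemma subgroup_nmult: "subgroup H \<Longrightarrow> x \<in> H \<Longrightarrow> nmult k x \<in> H"
  by (induction k) (auto simp: subgroup_def)

lemma subgroup_diff: "subgroup H \<Longrightarrow> x \<in> H \<Longrightarrow> y \<in> H \<Longrightarrow> x - y \<in> H"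
  unfolding subgroup_def by (metis diff_conv_add_uminus)

lemma subgroupI_finite:
  fixes H :: "'a::{finite,ab_group_add} set"
  assumes "0 \<in> H" and add_closed: "\<And>x y. x \<in> H \<Longrightarrow> y \<in> H \<Longrightarrow> x + y \<in> H"
  shows "subgroup H"
proof -
  have "- x \<in> H" if "x \<in> H" for x
  proof -
    obtain k where "0 < k" "nmult k x = 0"
      using ex_nmult_eq_0 by blast
    then have "- x = nmult (k - 1) x"
      by (cases k) (auto simp: add_eq_0_iff)
    moreover have "nmult j x \<in> H" for j
      using that by (induction j) (auto simp: \<open>0 \<in> H\<close> add_closed)
    ultimately show ?thesis by simp
  qed
  then show ?thesis
    using assms by (simp add: subgroup_def)
qed

definition order_mod :: "'a::{finite,ab_group_add} set \<Rightarrow> 'a \<Rightarrow> nat" where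
  "order_mod H g = (LEAST k. 0 < k \<and> nmult k g \<in> H)"

lemma order_mod:
  assumes "subgroup H"
  shows order_mod_pos: "0 < order_mod H g"
    and nmult_order_mod: "nmult (order_mod H g) g \<in> H"
proof -
  obtain k where "0 < k" "nmult k g = 0"
    using ex_nmult_eq_0 by blast
  then have "\<exists>k. 0 < k \<and> nmult k g \<in> H"
    using assms by (auto simp: subgroup_def)
  then have "0 < order_mod H g \<and> nmult (order_mod H g) g \<in> H"
    unfolding order_mod_def by (rule LeastI_ex)
  then show "0 < order_mod H g" "nmult (order_mod H g) g \<in> H"
    by auto
qed

lemma order_mod_dvd:
  assumes H: "subgroup H" and k: "nmult k g \<in> H"
  shows "order_mod H g dvd k"
proof -
  define m where "m = order_mod H g"
  define r where "r = k mod m"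
  have "nmult k g = nmult (r + k div m * m) g"
    by (simp add: r_def)
  also have "\<dots> = nmult r g + nmult (k div m) (nmult m g)"
    by (simp only: nmult_add nmult_mult)
  finally have "nmult k g = nmult r g + nmult (k div m) (nmult m g)" .
  moreover have "nmult (k div m) (nmult m g) \<in> H"
    unfolding m_def by (intro subgroup_nmult[OF H] nmult_order_mod[OF H])
  ultimately have "nmult r g \<in> H"
    using subgroup_diff[OF H k] by (metis add_diff_cancel)
  moreover have "r < m"
    using order_mod_pos[OF H] by (simp add: r_def m_def)
  ultimately have "r = 0"
    using not_less_Least[of r "\<lambda>k. 0 < k \<and> nmult k g \<in> H"]
    unfolding m_def order_mod_def by auto
  then show ?thesis
    by (simp add: r_def m_def dvd_eq_mod_eq_0)
qed

lemma ex_complex_root: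
  assumes "0 < m"
  shows "\<exists>w::complex. w ^ m = z"
proof -
  have "rcis (root m (cmod z)) (Arg z / m) ^ m = rcis (root m (cmod z) ^ m) (m * (Arg z / m))"
    by (rule DeMoivre2)
  also have "\<dots> = z"
    using assms by (simp add: real_root_pow_pos2 rcis_cmod_Arg)
  finally show ?thesis ..
qed

definition character_on :: "'a::ab_group_add set \<Rightarrow> ('a \<Rightarrow> complex) \<Rightarrow> bool" where
  "character_on H \<chi> \<longleftrightarrow> \<chi> 0 = 1 \<and> (\<forall>x\<in>H. \<forall>y\<in>H. \<chi> (x + y) = \<chi> x * \<chi> y)"

lemma characters_eq: "characters = {\<chi>. character_on UNIV \<chi>}"
  by (simp add: characters_def character_on_def)

lemma character_on_nmult:
  assumes "subgroup H" "character_on H \<chi>" "x \<in> H"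
  shows "\<chi> (nmult k x) = \<chi> x ^ k"
  using assms by (induction k) (auto simp: character_on_def subgroup_nmult)

definition adjoin :: "'a::ab_group_add set \<Rightarrow> 'a \<Rightarrow> 'a set" where
  "adjoin H g = {h + nmult k g | h k. h \<in> H}"

lemma adjoinI: "h \<in> H \<Longrightarrow> h + nmult k g \<in> adjoin H g"
  unfolding adjoin_def by blast

lemma adjoinE:
  assumes "y \<in> adjoin H g"
  obtains h k where "h \<in> H" "y = h + nmult k g"
  using assms unfolding adjoin_def by blast

lemma adjoin_add_eq: "(h1 + nmult k1 g) + (h2 + nmult k2 g) = (h1 + h2) + nmult (k1 + k2) g"
  by (simp add: nmult_add algebra_simps)

lemma subgroup_adjoin:
  fixes H :: "'a::{finite,ab_group_add} set"
  assumes H: "subgroup H"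
  shows "subgroup (adjoin H g)"
proof (rule subgroupI_finite)
  show "0 \<in> adjoin H g"
    using adjoinI[of 0 H 0 g] H by (simp add: subgroup_def)
  fix x y assume "x \<in> adjoin H g" "y \<in> adjoin H g"
  then obtain h1 k1 h2 k2 where "h1 \<in> H" "h2 \<in> H" "x = h1 + nmult k1 g" "y = h2 + nmult k2 g"
    by (elim adjoinE)
  moreover have "h1 + h2 \<in> H"
    using H \<open>h1 \<in> H\<close> \<open>h2 \<in> H\<close> by (simp add: subgroup_def)
  ultimately show "x + y \<in> adjoin H g"
    by (simp add: adjoin_add_eq adjoinI)
qed

lemma subset_adjoin: "subgroup H \<Longrightarrow> insert g H \<subseteq> adjoin H g"
  using adjoinI[of 0 H 1 g] adjoinI[of _ H 0 g] by (auto simp: subgroup_def)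

context
  fixes H :: "'a::{finite,ab_group_add} set" and \<chi> :: "'a \<Rightarrow> complex" and g :: 'a and w :: complex
  assumes H: "subgroup H" and \<chi>: "character_on H \<chi>"
    and w: "w ^ order_mod H g = \<chi> (nmult (order_mod H g) g)"
begin

text \<open>This makes \<open>\<psi> (h + k g) = \<chi> h * w ^ k\<close> well defined on \<open>H + \<langle>g\<rangle>\<close>: the multiplier \<open>k\<close>
  is determined modulo \<open>order_mod H g\<close>, and \<open>w\<close> was chosen to match \<open>\<chi>\<close> on that period.\<close>

lemma adjoin_value_unique:
  assumes "h \<in> H" "h' \<in> H" "h + nmult k g = h' + nmult k' g"
  shows "\<chi> h * w ^ k = \<chi> h' * w ^ k'"
proof -
  define m where "m = order_mod H g"
  have *: "\<chi> h * w ^ k = \<chi> h' * w ^ k'"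
    if "h \<in> H" "h' \<in> H" "k' \<le> k" and eq: "h + nmult k g = h' + nmult k' g" for h h' k k'
  proof -
    have "nmult k g = nmult (k - k') g + nmult k' g"
      using \<open>k' \<le> k\<close> by (simp add: nmult_add[symmetric])
    then have h': "h' = h + nmult (k - k') g"
      using eq by (simp add: algebra_simps)
    then have "nmult (k - k') g \<in> H"
      using subgroup_diff[OF H \<open>h' \<in> H\<close> \<open>h \<in> H\<close>] by simp
    then obtain q where q: "k - k' = m * q"
      using order_mod_dvd[OF H] unfolding m_def by (auto elim!: dvdE)
    have "nmult (k - k') g = nmult q (nmult m g)"
      using nmult_mult[of q m g] by (simp add: q mult.commute)
    moreover have "nmult m g \<in> H"
      unfolding m_def by (rule nmult_order_mod[OF H])
    ultimately have "\<chi> h' = \<chi> h * \<chi> (nmult m g) ^ q"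
      using h' \<chi> \<open>h \<in> H\<close> subgroup_nmult[OF H]
      by (simp add: character_on_def character_on_nmult[OF H \<chi>])
    also have "\<dots> = \<chi> h * w ^ (k - k')"
      by (simp add: q w[folded m_def] power_mult)
    finally show ?thesis
      using \<open>k' \<le> k\<close> by (simp add: mult.assoc power_add[symmetric])
  qed
  show ?thesis
    using *[of h h' k' k] *[of h' h k k'] assms by (cases "k' \<le> k") auto
qed

lemma character_on_adjoin:
  obtains \<psi> where "character_on (adjoin H g) \<psi>" "\<forall>h\<in>H. \<psi> h = \<chi> h" "\<psi> g = w"
proof -
  have "\<forall>y\<in>adjoin H g. \<exists>z. \<forall>h\<in>H. \<forall>k. y = h + nmult k g \<longrightarrow> z = \<chi> h * w ^ k"
  proof
    fix y assume "y \<in> adjoin H g"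
    then obtain h0 k0 where "h0 \<in> H" "y = h0 + nmult k0 g"
      by (elim adjoinE)
    then show "\<exists>z. \<forall>h\<in>H. \<forall>k. y = h + nmult k g \<longrightarrow> z = \<chi> h * w ^ k"
      using adjoin_value_unique[of h0] by blast
  qed
  from bchoice[OF this] obtain \<psi>
    where "\<forall>y\<in>adjoin H g. \<forall>h\<in>H. \<forall>k. y = h + nmult k g \<longrightarrow> \<psi> y = \<chi> h * w ^ k"
    by blast
  then have \<psi>: "\<psi> (h + nmult k g) = \<chi> h * w ^ k" if "h \<in> H" for h k
    using that adjoinI by blast
  have "0 \<in> H" and \<chi>0: "\<chi> 0 = 1"
    using H \<chi> by (auto simp: subgroup_def character_on_def)
  have "character_on (adjoin H g) \<psi>"
    unfolding character_on_def
  proof (intro conjI ballI)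
    show "\<psi> 0 = 1"
      using \<psi>[OF \<open>0 \<in> H\<close>, of 0] \<chi>0 by simp
    fix x y assume "x \<in> adjoin H g" "y \<in> adjoin H g"
    then obtain h1 k1 h2 k2 where "h1 \<in> H" "h2 \<in> H"
      and x: "x = h1 + nmult k1 g" and y: "y = h2 + nmult k2 g"
      by (elim adjoinE)
    have "h1 + h2 \<in> H" "\<chi> (h1 + h2) = \<chi> h1 * \<chi> h2"
      using H \<chi> \<open>h1 \<in> H\<close> \<open>h2 \<in> H\<close> by (auto simp: subgroup_def character_on_def)
    then show "\<psi> (x + y) = \<psi> x * \<psi> y"
      unfolding x y adjoin_add_eq
      by (simp add: \<psi> \<open>h1 \<in> H\<close> \<open>h2 \<in> H\<close> power_add mult_ac)
  qed
  moreover have "\<forall>h\<in>H. \<psi> h = \<chi> h"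
    using \<psi>[of _ 0] by simp
  moreover have "\<psi> g = w"
    using \<psi>[OF \<open>0 \<in> H\<close>, of 1] \<chi>0 by simp
  ultimately show ?thesis
    using that by blast
qed

end

lemma character_on_extend:
  fixes \<chi> :: "'a::{finite,ab_group_add} \<Rightarrow> complex"
  assumes "subgroup H" "character_on H \<chi>"
  shows "\<exists>\<psi>\<in>characters. \<forall>h\<in>H. \<psi> h = \<chi> h"
  using assms
proof (induction "card (- H)" arbitrary: H \<chi> rule: less_induct)
  case less
  show ?case
  proof (cases "H = UNIV")
    case True
    then show ?thesis
      using less.prems by (auto simp: characters_eq)
  next
    case False
    then obtain g where "g \<notin> H" by blast
    obtain w where w: "w ^ order_mod H g = \<chi> (nmult (order_mod H g) g)"
      using ex_complex_root order_mod_pos[OF less.prems(1)] by blast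
    obtain \<psi> where \<psi>: "character_on (adjoin H g) \<psi>" "\<forall>h\<in>H. \<psi> h = \<chi> h"
      by (rule character_on_adjoin[OF less.prems w]) blast
    have "insert g H \<subseteq> adjoin H g"
      using subset_adjoin[OF less.prems(1)] .
    then have "card (- adjoin H g) < card (- H)"
      using \<open>g \<notin> H\<close> by (intro psubset_card_mono) auto
    then obtain \<phi> where "\<phi> \<in> characters" "\<forall>h\<in>adjoin H g. \<phi> h = \<psi> h"
      using less.hyps subgroup_adjoin[OF less.prems(1)] \<psi>(1) by blast
    then show ?thesis
      using \<open>insert g H \<subseteq> adjoin H g\<close> \<psi>(2) by (intro bexI[of _ \<phi>]) auto
  qed
qed

lemma ex_root_unity_neq_1:
  assumes "2 \<le> m"
  shows "\<exists>w::complex. w ^ m = 1 \<and> w \<noteq> 1"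
proof (rule ccontr)
  assume "\<not> ?thesis"
  then have "{z::complex. z ^ m = 1} \<subseteq> {1}"
    by auto
  then have "card {z::complex. z ^ m = 1} \<le> card {1::complex}"
    by (intro card_mono) auto
  then show False
    using card_roots_unity_eq[of m] assms by simp
qed

lemma characters_separate_points:
  fixes x :: "'a::{finite,ab_group_add}"
  assumes "x \<noteq> 0"
  shows "\<exists>\<chi>\<in>characters. \<chi> x \<noteq> 1"
proof -
  have H: "subgroup {0::'a}" and \<chi>: "character_on {0::'a} (\<lambda>_. 1)"
    by (simp_all add: subgroup_def character_on_def)
  have "order_mod {0} x \<noteq> 1"
    using nmult_order_mod[OF H, of x] assms by auto
  then have "2 \<le> order_mod {0} x"
    using order_mod_pos[OF H, of x] by linarith
  then obtain w :: complex where w: "w ^ order_mod {0} x = 1" "w \<noteq> 1"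
    using ex_root_unity_neq_1 by blast
  then have "w ^ order_mod {0} x = (\<lambda>_. 1) (nmult (order_mod {0} x) x)"
    by simp
  then obtain \<psi> where \<psi>: "character_on (adjoin {0} x) \<psi>" "\<psi> x = w"
    by (rule character_on_adjoin[OF H \<chi>]) blast
  obtain \<phi> where "\<phi> \<in> characters" "\<forall>h\<in>adjoin {0} x. \<phi> h = \<psi> h"
    using character_on_extend[OF subgroup_adjoin[OF H] \<psi>(1)] by blast
  moreover have "x \<in> adjoin {0} x"
    using subset_adjoin[OF H] by blast
  ultimately show ?thesis
    using \<psi>(2) w(2) by (intro bexI[of _ \<phi>]) auto
qed

lemma finite_characters: "finite (characters :: ('a::{finite,ab_group_add} \<Rightarrow> complex) set)"
proof -
  obtain per :: "'a \<Rightarrow> nat" where per: "\<And>x. 0 < per x \<and> nmult (per x) x = 0"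
    using ex_nmult_eq_0 by metis
  define R where "R = (\<Union>x. {z::complex. z ^ per x = 1})"
  have "finite R"
    unfolding R_def using per by (auto intro!: finite_roots_unity simp: Suc_le_eq)
  have "\<chi> x \<in> R" if "\<chi> \<in> characters" for \<chi> :: "'a \<Rightarrow> complex" and x
  proof -
    have "character_on UNIV \<chi>" "subgroup (UNIV :: 'a set)"
      using that by (auto simp: characters_eq subgroup_def)
    then have "\<chi> x ^ per x = \<chi> 0"
      using per[of x] character_on_nmult[of UNIV \<chi> x "per x"] by simp
    then show ?thesis
      using \<open>character_on UNIV \<chi>\<close> unfolding R_def character_on_def by auto
  qed
  then have "characters \<subseteq> PiE UNIV (\<lambda>_::'a. R)"
    by auto
  moreover have "finite (PiE UNIV (\<lambda>_::'a. R))"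
    using \<open>finite R\<close> by (intro finite_PiE) auto
  ultimately show ?thesis
    by (rule finite_subset)
qed

lemma one_in_characters [simp]: "(\<lambda>_. 1) \<in> characters"
  by (simp add: characters_def)

lemma character_nonzero: "\<chi> \<in> characters \<Longrightarrow> \<chi> x \<noteq> 0"
  unfolding characters_def by (metis (mono_tags, lifting) CollectD add.right_inverse mult_zero_left zero_neq_one)

lemma sum_characters_eq_0:
  fixes x :: "'a::{finite,ab_group_add}"
  assumes "x \<noteq> 0"
  shows "(\<Sum>\<chi>\<in>characters. \<chi> x) = 0"
proof -
  obtain \<chi>0 where \<chi>0: "\<chi>0 \<in> characters" "\<chi>0 x \<noteq> 1"
    using characters_separate_points[OF assms] by blast
  have "(\<Sum>\<chi>\<in>characters. \<chi> x) = (\<Sum>\<chi>\<in>characters. \<chi>0 x * \<chi> x)"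
    by (rule sum.reindex_bij_witness[of _ "\<lambda>\<chi> y. \<chi>0 y * \<chi> y" "\<lambda>\<chi> y. \<chi> y / \<chi>0 y"])
       (use \<chi>0 character_nonzero[OF \<chi>0(1)] in \<open>auto simp: characters_def\<close>)
  also have "\<dots> = \<chi>0 x * (\<Sum>\<chi>\<in>characters. \<chi> x)"
    by (simp add: sum_distrib_left)
  finally show ?thesis
    using \<chi>0(2) by simp
qed

lemma sum_character_eq_0:
  fixes \<chi> :: "'a::{finite,ab_group_add} \<Rightarrow> complex"
  assumes "\<chi> \<in> characters" "\<chi> \<noteq> (\<lambda>_. 1)"
  shows "(\<Sum>x\<in>UNIV. \<chi> x) = 0"
proof -
  obtain y where y: "\<chi> y \<noteq> 1"
    using assms(2) by auto
  have "(\<Sum>x\<in>UNIV. \<chi> x) = (\<Sum>x\<in>UNIV. \<chi> (x + y))"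
    by (rule sum.reindex_bij_witness[of _ "\<lambda>x. x + y" "\<lambda>x. x - y"]) auto
  also have "\<dots> = \<chi> y * (\<Sum>x\<in>UNIV. \<chi> x)"
    using assms(1) by (simp add: characters_def sum_distrib_left mult.commute)
  finally show ?thesis
    using y by simp
qed

lemma card_characters:
  "card (characters :: ('a::{finite,ab_group_add} \<Rightarrow> complex) set) = card (UNIV :: 'a set)"
proof -
  let ?C = "characters :: ('a \<Rightarrow> complex) set"
  let ?one = "\<lambda>_::'a. 1::complex"
  have "of_nat (card ?C) = (\<Sum>x\<in>{0}. \<Sum>\<chi>\<in>?C. \<chi> x)"
    by (simp add: characters_def)
  also have "\<dots> = (\<Sum>x\<in>UNIV. \<Sum>\<chi>\<in>?C. \<chi> x)"
    by (intro sum.mono_neutral_left) (auto simp: sum_characters_eq_0)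
  also have "\<dots> = (\<Sum>\<chi>\<in>?C. \<Sum>x\<in>UNIV. \<chi> x)"
    by (rule sum.swap)
  also have "\<dots> = (\<Sum>\<chi>\<in>{?one}. \<Sum>x\<in>UNIV. \<chi> x)"
    by (intro sum.mono_neutral_right finite_characters)
       (auto simp: sum_character_eq_0)
  also have "\<dots> = of_nat (card (UNIV :: 'a set))"
    by simp
  finally show ?thesis
    by (simp only: of_nat_eq_iff)
qed

lemma sum_characters:
  "(\<Sum>\<chi>\<in>characters. \<chi> x) = (if x = 0 then of_nat (card (UNIV :: 'a set)) else (0::complex))"
  for x :: "'a::{finite,ab_group_add}"
proof (cases "x = 0")
  case True
  have "(\<Sum>\<chi>\<in>characters. \<chi> (0::'a)) = of_nat (card (characters :: ('a \<Rightarrow> complex) set))"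
    by (simp add: characters_def)
  with True show ?thesis
    by (simp add: card_characters)
qed (simp add: sum_characters_eq_0)

lemma sum_nontrivial_characters:
  "(\<Sum>\<chi>\<in>characters - {\<lambda>_. 1}. \<chi> x) = (if x = 0 then of_nat (card (UNIV :: 'a set)) - 1 else - 1)"
  for x :: "'a::{finite,ab_group_add}"
  by (simp add: sum_diff1 finite_characters sum_characters)

lemma sum_in_int_char_comb:
  assumes "finite S" "S \<subseteq> characters"
  shows "(\<lambda>x. \<Sum>\<chi>\<in>S. \<chi> x) \<in> int_char_comb"
  unfolding int_char_comb_def using assms
  by (intro CollectI exI[of _ S] exI[of _ "\<lambda>_. 1"]) auto

lemma mahler_m_eq_single_point:
  fixes f :: "'a::{finite,ab_group_add} \<Rightarrow> complex"
  assumes "f a \<noteq> 0" and "\<And>x. x \<noteq> a \<Longrightarrow> cmod (f x) = 1"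
  shows "mahler_m f = ereal (ln (cmod (f a)) / card (UNIV :: 'a set))"
proof -
  have "(\<Sum>x\<in>UNIV. ln (cmod (f x))) = (\<Sum>x\<in>{a}. ln (cmod (f x)))"
    by (intro sum.mono_neutral_right) (auto simp: assms(2))
  moreover have "f x \<noteq> 0" for x
    using assms by (metis norm_zero zero_neq_one)
  ultimately show ?thesis
    unfolding mahler_m_def by simp
qed

lemma lehmer_const_le_mahler_m:
  "f \<in> int_char_comb \<Longrightarrow> mahler_m f > 0 \<Longrightarrow> lehmer_const TYPE('a) \<le> mahler_m f"
  for f :: "'a::{finite,ab_group_add} \<Rightarrow> complex"
  unfolding lehmer_const_def by (rule Inf_lower) blast

theorem lemma4p4:
  assumes "card (UNIV :: 'a::{finite,ab_group_add} set) \<ge> 3"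
  shows "lehmer_const TYPE('a) \<le> ereal (ln (real (card (UNIV :: 'a set)) - 1) / real (card (UNIV :: 'a set)))"
proof -
  let ?n = "real (card (UNIV :: 'a set))"
  define f where "f = (\<lambda>x::'a. \<Sum>\<chi>\<in>characters - {\<lambda>_. 1}. \<chi> x)"
  have "f \<in> int_char_comb"
    unfolding f_def by (rule sum_in_int_char_comb) (auto simp: finite_characters)
  have "f 0 = of_real (?n - 1)"
    unfolding f_def by (simp add: sum_nontrivial_characters)
  then have "cmod (f 0) = ?n - 1"
    using assms by (simp only: norm_of_real)
  moreover have "cmod (f x) = 1" if "x \<noteq> 0" for x
    using that by (simp add: f_def sum_nontrivial_characters)
  ultimately have m: "mahler_m f = ereal (ln (?n - 1) / ?n)"
    using assms by (subst mahler_m_eq_single_point[of f 0]) auto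
  moreover have "mahler_m f > 0"
    using assms unfolding m by simp
  ultimately show ?thesis
    using lehmer_const_le_mahler_m[OF \<open>f \<in> int_char_comb\<close>] by simp
qed

end
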